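(* Let $G$ be a graph of girth at least $4$. Then $G$ is fragile if and only if every subgraph $H$ of $G$ either has at most $2$ vertices or admits an independent cutset of size at most $2$.
   Context: All graphs are finite and simple. A graph is $k$-connected if it has at least $k+1$ vertices and no vertex cutset with at most $k-1$ vertices. A graph is fragile if it has no $3$-connected subgraph. A cutset of a graph $H$ is a set $S\subseteq V(H)$ (possibly empty) such that $H\setminus S$ is disconnected; it is independent if no two vertices of $S$ are adjacent. The girth of a graph is the length of its shortest cycle (infinite if acyclic). *)

theory Defs
  imports Main
begin

definition graph :: "'a set \<Rightarrow> 'a set set \<Rightarrow> bool" where
  "graph V E \<longleftrightarrow> finite V \<and> (\<forall>e\<in>E. e \<subseteq> V \<and> card e = 2)"

definition adj :: "'a set set \<Rightarrow> 'a \<Rightarrow> 'a \<Rightarrow> bool" where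
  "adj E u v \<longleftrightarrow> {u, v} \<in> E"

definition reachable :: "'a set \<Rightarrow> 'a set set \<Rightarrow> 'a \<Rightarrow> 'a \<Rightarrow> bool" where
  "reachable V E u v \<longleftrightarrow> (\<lambda>x y. x \<in> V \<and> y \<in> V \<and> adj E x y)\<^sup>*\<^sup>* u v"

definition disconnected :: "'a set \<Rightarrow> 'a set set \<Rightarrow> bool" where
  "disconnected V E \<longleftrightarrow> (\<exists>u\<in>V. \<exists>v\<in>V. \<not> reachable V E u v)"

definition subgraph :: "'a set \<Rightarrow> 'a set set \<Rightarrow> 'a set \<Rightarrow> 'a set set \<Rightarrow> bool" where
  "subgraph V' E' V E \<longleftrightarrow> V' \<subseteq> V \<and> E' \<subseteq> E \<and> graph V' E'"

definition cutset :: "'a set \<Rightarrow> 'a set set \<Rightarrow> 'a set \<Rightarrow> bool" where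
  "cutset V E S \<longleftrightarrow> S \<subseteq> V \<and> disconnected (V - S) {e\<in>E. e \<inter> S = {}}"

definition independent :: "'a set set \<Rightarrow> 'a set \<Rightarrow> bool" where
  "independent E S \<longleftrightarrow> (\<forall>u\<in>S. \<forall>v\<in>S. \<not> adj E u v)"

definition k_connected :: "nat \<Rightarrow> 'a set \<Rightarrow> 'a set set \<Rightarrow> bool" where
  "k_connected k V E \<longleftrightarrow> card V \<ge> k + 1 \<and>
     \<not> (\<exists>S. cutset V E S \<and> card S \<le> k - 1)"

definition fragile :: "'a set \<Rightarrow> 'a set set \<Rightarrow> bool" where
  "fragile V E \<longleftrightarrow> \<not> (\<exists>V' E'. subgraph V' E' V E \<and> k_connected 3 V' E')"

text \<open>Girth at least 4 for a simple graph: no cycle of length 3 (simple graphs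
  have no cycles of length 1 or 2), i.e. no triangle.\<close>
definition girth_ge_4 :: "'a set \<Rightarrow> 'a set set \<Rightarrow> bool" where
  "girth_ge_4 V E \<longleftrightarrow> \<not> (\<exists>a\<in>V. \<exists>b\<in>V. \<exists>c\<in>V. adj E a b \<and> adj E b c \<and> adj E a c)"

end

theory Submission
  imports Defs
begin

text \<open>Only one direction needs an argument: a 3-connected subgraph with at least four vertices
  has no cutset of size at most 2. Conversely, let \<open>G\<close> be fragile and triangle-free, and
  suppose a subgraph \<open>H\<close> with at least three vertices has no independent cutset of size at most 2.
  Then every cutset of size at most 2 of \<open>H\<close> is an edge \<open>uv\<close>. Choose such a cutset \<open>{u,v}\<close>
  together with a component side \<open>X\<close> of minimum size. If \<open>|X| = 1\<close>, the vertex of \<open>X\<close> is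
  adjacent to both \<open>u\<close> and \<open>v\<close> (otherwise \<open>H\<close> has a cut vertex), a triangle. If \<open>|X| \<ge> 2\<close>,
  the subgraph induced on \<open>X \<union> {u,v}\<close> is not 3-connected, and a small cutset of it yields a
  separation of \<open>H\<close> whose side lies inside \<open>X\<close>; minimality forces this cutset to be \<open>{u,v}\<close>
  and the side to be all of \<open>X\<close>, which is absurd.\<close>

lemma adj_sym: "adj E u v = adj E v u"
  unfolding adj_def by (simp add: insert_commute)

lemma adj_irrefl: "graph V E \<Longrightarrow> \<not> adj E u u"
  unfolding adj_def graph_def by force

lemma subgraph_trans:
  "subgraph V'' E'' V' E' \<Longrightarrow> subgraph V' E' V E \<Longrightarrow> subgraph V'' E'' V E"
  unfolding subgraph_def by blast

lemma induced_subgraph: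
  assumes "graph V E" and "K \<subseteq> V"
  shows "subgraph K {e\<in>E. e \<subseteq> K} V E"
  using assms finite_subset unfolding subgraph_def graph_def by blast

lemma card_le_2_eq_pair:
  assumes "finite T" "card T \<le> 2" "u \<in> T" "v \<in> T" "u \<noteq> v"
  shows "T = {u, v}"
proof -
  have "card {u, v} = 2" using assms(5) by simp
  moreover have "{u, v} \<subseteq> T" using assms(3,4) by blast
  ultimately show ?thesis using assms(1,2) by (metis card_seteq)
qed

text \<open>\<open>X\<close> is a union of components of the graph with \<open>T\<close> deleted, and some component lies
  outside \<open>X\<close>.\<close>

definition separation :: "'a set \<Rightarrow> 'a set set \<Rightarrow> 'a set \<Rightarrow> 'a set \<Rightarrow> bool" where
  "separation V E T X \<longleftrightarrow> T \<subseteq> V \<and> X \<noteq> {} \<and> X \<subseteq> V - T \<and> V - T - X \<noteq> {} \<and>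
     (\<forall>x\<in>X. \<forall>y\<in>V - T. adj E x y \<longrightarrow> y \<in> X)"

lemma rtranclp_closed_set:
  assumes "r\<^sup>*\<^sup>* a b" "a \<in> A" "\<And>x y. x \<in> A \<Longrightarrow> r x y \<Longrightarrow> y \<in> A"
  shows "b \<in> A"
  using assms by (induction rule: rtranclp_induct) auto

lemma cutset_if_separation:
  assumes "separation V E T X"
  shows "cutset V E T"
proof -
  let ?E = "{e\<in>E. e \<inter> T = {}}"
  from assms obtain a b where a: "a \<in> X" and b: "b \<in> V - T - X"
    unfolding separation_def by blast
  have "\<not> reachable (V - T) ?E a b"
  proof
    assume "reachable (V - T) ?E a b"
    then have "b \<in> X"
      unfolding reachable_def
      by (rule rtranclp_closed_set) (use a assms in \<open>auto simp: separation_def adj_def\<close>)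
    with b show False by blast
  qed
  moreover have "a \<in> V - T" using a assms unfolding separation_def by blast
  ultimately show ?thesis
    using assms b unfolding cutset_def disconnected_def separation_def by blast
qed

lemma separation_if_cutset:
  assumes "cutset V E T"
  obtains X where "separation V E T X"
proof -
  let ?E = "{e\<in>E. e \<inter> T = {}}"
  let ?R = "\<lambda>x y. x \<in> V - T \<and> y \<in> V - T \<and> adj ?E x y"
  from assms obtain a b where ab: "a \<in> V - T" "b \<in> V - T" "\<not> reachable (V - T) ?E a b"
    and "T \<subseteq> V"
    unfolding cutset_def disconnected_def by blast
  define X where "X = {y. ?R\<^sup>*\<^sup>* a y}"
  have "X \<subseteq> V - T"
  proof
    fix y assume "y \<in> X"
    then have "?R\<^sup>*\<^sup>* a y" unfolding X_def by simp
    then show "y \<in> V - T" using ab(1) by (rule rtranclp_closed_set) auto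
  qed
  moreover have "\<forall>x\<in>X. \<forall>y\<in>V - T. adj E x y \<longrightarrow> y \<in> X"
  proof (intro ballI impI)
    fix x y assume "x \<in> X" "y \<in> V - T" "adj E x y"
    moreover from \<open>x \<in> X\<close> \<open>X \<subseteq> V - T\<close> have "x \<in> V - T" by blast
    ultimately show "y \<in> X"
      unfolding X_def adj_def by (auto intro: rtranclp.rtrancl_into_rtrancl)
  qed
  moreover have "a \<in> X" "b \<notin> X" using ab(3) unfolding X_def reachable_def by simp_all
  ultimately have "separation V E T X"
    using \<open>T \<subseteq> V\<close> ab(2) unfolding separation_def by blast
  then show thesis by (rule that)
qed

lemma separation_complement: "separation V E T X \<Longrightarrow> separation V E T (V - T - X)"
  unfolding separation_def by (auto simp: adj_sym)

text \<open>No edge joins \<open>Y\<close> to the other side, so one of the two sides avoids both its ends.\<close>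

lemma separation_avoiding_edge:
  assumes "separation V E S Y" "adj E u v" "u \<in> V" "v \<in> V"
  obtains Y' where "separation V E S Y'" "Y' \<inter> {u, v} = {}"
proof (cases "Y \<inter> {u, v} = {}")
  case True
  with assms(1) show thesis by (rule that)
next
  case False
  then have "(V - S - Y) \<inter> {u, v} = {}"
    using assms adj_sym[of E u v] unfolding separation_def by blast
  with separation_complement[OF assms(1)] show thesis by (rule that)
qed

text \<open>All neighbours of \<open>X\<close> lie in \<open>X \<union> T\<close>, so the induced subgraph sees every edge
  leaving \<open>Y\<close>.\<close>

lemma separation_from_induced:
  assumes "separation V E T X"
    and "separation (X \<union> T) {e\<in>E. e \<subseteq> X \<union> T} S Y" and "Y \<inter> T = {}"
  shows "separation V E S Y"
  unfolding separation_def
proof (intro conjI ballI impI)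
  have "X \<union> T \<subseteq> V" using assms(1) unfolding separation_def by blast
  then show "S \<subseteq> V" "Y \<noteq> {}" "Y \<subseteq> V - S" "V - S - Y \<noteq> {}"
    using assms(2) unfolding separation_def by blast+
  fix x y assume "x \<in> Y" "y \<in> V - S" "adj E x y"
  moreover have "x \<in> X" using \<open>x \<in> Y\<close> assms(2,3) unfolding separation_def by blast
  ultimately have "y \<in> X \<union> T" using assms(1) unfolding separation_def by blast
  with \<open>x \<in> X\<close> \<open>adj E x y\<close> have "adj {e\<in>E. e \<subseteq> X \<union> T} x y" unfolding adj_def by auto
  with \<open>x \<in> Y\<close> \<open>y \<in> V - S\<close> \<open>y \<in> X \<union> T\<close> show "y \<in> Y"
    using assms(2) unfolding separation_def by blast
qed

lemma fragile_subgraph_small_cutset: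
  assumes "fragile V E" "subgraph V' E' V E" "card V' \<ge> 4"
  obtains S where "cutset V' E' S" "card S \<le> 2"
  using assms unfolding fragile_def k_connected_def by fastforce

lemma triangle_free_three_vertices_separation:
  assumes "graph V E" "card V = 3" "\<not> (\<exists>a\<in>V. \<exists>b\<in>V. \<exists>c\<in>V. adj E a b \<and> adj E b c \<and> adj E a c)"
  obtains t X where "separation V E {t} X"
proof -
  obtain x y z where V: "V = {x, y, z}" "x \<noteq> y" "y \<noteq> z" "x \<noteq> z"
    using assms(2) by (auto simp: card_3_iff)
  have sep: "separation V E {c} {a}" if "V = {a, b, c}" "a \<noteq> b" "b \<noteq> c" "a \<noteq> c"
    "\<not> adj E a b" for a b c
    using that adj_irrefl[OF assms(1), of a] unfolding separation_def by auto
  have "\<not> adj E x y \<or> \<not> adj E y z \<or> \<not> adj E x z" using assms(3) V(1) by blast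
  then show thesis
    using sep[of x y z] sep[of y z x] sep[of x z y] V that by (auto simp: insert_commute)
qed

lemma small_separator_is_edge:
  assumes "graph V E" "\<not> (\<exists>S. cutset V E S \<and> independent E S \<and> card S \<le> 2)"
    and "separation V E T X" "card T \<le> 2"
  obtains u v where "T = {u, v}" "u \<noteq> v" "adj E u v"
proof -
  have "\<not> independent E T" using assms cutset_if_separation by blast
  then obtain u v where uv: "u \<in> T" "v \<in> T" "adj E u v" unfolding independent_def by blast
  with adj_irrefl[OF assms(1)] have "u \<noteq> v" by blast
  have "finite T"
    using assms(1,3) finite_subset unfolding graph_def separation_def by blast
  with uv \<open>u \<noteq> v\<close> assms(4) show thesis by (metis card_le_2_eq_pair that)
qed

lemma singleton_side_adj_separator:
  assumes "separation V E {u, v} {w}" "u \<noteq> v" "\<And>q Y. \<not> separation V E {q} Y"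
  shows "adj E w u"
proof (rule ccontr)
  assume "\<not> adj E w u"
  with assms(1,2) have "separation V E {v} {w}" unfolding separation_def by auto
  with assms(3) show False by blast
qed

lemma minimal_separation_side_singleton:
  assumes "fragile V E" and H: "subgraph V' E' V E"
    and edge_cuts: "\<And>T X. separation V' E' T X \<Longrightarrow> card T \<le> 2 \<Longrightarrow> \<exists>p q. T = {p, q} \<and> p \<noteq> q"
    and sep: "separation V' E' {u, v} X" and "u \<noteq> v" "adj E' u v"
    and minimal: "\<And>T Y. separation V' E' T Y \<Longrightarrow> card T \<le> 2 \<Longrightarrow> card X \<le> card Y"
  shows "card X = 1"
proof (rule ccontr)
  assume "card X \<noteq> 1"
  let ?K = "X \<union> {u, v}"
  let ?EK = "{e\<in>E'. e \<subseteq> ?K}"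
  have "graph V' E'" and "finite V'" using H unfolding subgraph_def graph_def by auto
  moreover have X: "X \<subseteq> V' - {u, v}" "X \<noteq> {}" using sep unfolding separation_def by auto
  ultimately have "finite X" by (meson finite_Diff finite_subset)
  with X(2) have "card X \<noteq> 0" by simp
  with \<open>card X \<noteq> 1\<close> have "card X \<ge> 2" by linarith
  moreover have "card ?K = card X + 2"
    using X(1) \<open>finite X\<close> \<open>u \<noteq> v\<close> by (subst card_Un_disjoint) auto
  ultimately have "card ?K \<ge> 4" by simp
  moreover have "?K \<subseteq> V'" using sep unfolding separation_def by blast
  then have "subgraph ?K ?EK V E"
    using subgraph_trans[OF induced_subgraph[OF \<open>graph V' E'\<close>] H] by blast
  ultimately obtain S where S: "cutset ?K ?EK S" "card S \<le> 2"
    using fragile_subgraph_small_cutset \<open>fragile V E\<close> by blast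
  obtain Y0 where "separation ?K ?EK S Y0" using S(1) by (rule separation_if_cutset)
  moreover have "adj ?EK u v" using \<open>adj E' u v\<close> unfolding adj_def by auto
  ultimately obtain Y where Y: "separation ?K ?EK S Y" "Y \<inter> {u, v} = {}"
    by (rule separation_avoiding_edge) auto
  have sepY: "separation V' E' S Y" using separation_from_induced[OF sep Y] .
  have "Y \<subseteq> X - S" using Y unfolding separation_def by blast
  then have "card Y \<le> card (X - S)" using \<open>finite X\<close> by (intro card_mono) auto
  with minimal[OF sepY S(2)] have "card X \<le> card (X - S)" by linarith
  then have X_S: "X - S = X" using \<open>finite X\<close> by (intro card_seteq) auto
  with \<open>Y \<subseteq> X - S\<close> \<open>finite X\<close> minimal[OF sepY S(2)] have "Y = X"
    using card_seteq[of X Y] by simp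
  moreover have "S \<subseteq> ?K" using Y(1) unfolding separation_def by blast
  ultimately have "S \<subseteq> {u, v}" using X_S by blast
  moreover obtain p q where "S = {p, q}" "p \<noteq> q" using edge_cuts[OF sepY S(2)] by blast
  ultimately have "S = {u, v}" using \<open>u \<noteq> v\<close> by (intro card_seteq) auto
  with \<open>Y = X\<close> Y(1) X(1) show False unfolding separation_def by blast
qed

lemma small_independent_cutset_if_fragile:
  assumes "girth_ge_4 V E" "fragile V E" and H: "subgraph V' E' V E" and "card V' \<ge> 3"
  shows "\<exists>S. cutset V' E' S \<and> independent E' S \<and> card S \<le> 2"
proof (rule ccontr)
  assume no_cutset: "\<not> ?thesis"
  have "graph V' E'" using H unfolding subgraph_def by blast
  have triangle_free: "\<not> (\<exists>a\<in>V'. \<exists>b\<in>V'. \<exists>c\<in>V'. adj E' a b \<and> adj E' b c \<and> adj E' a c)"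
    using assms(1) H unfolding girth_ge_4_def subgraph_def adj_def by blast
  have edge_cuts: "\<exists>p q. T = {p, q} \<and> p \<noteq> q \<and> adj E' p q"
    if "separation V' E' T X" "card T \<le> 2" for T X
    using small_separator_is_edge[OF \<open>graph V' E'\<close> no_cutset that] by metis
  have "\<exists>T X. separation V' E' T X \<and> card T \<le> 2"
  proof (cases "card V' \<ge> 4")
    case True
    with assms(2) H obtain S where "cutset V' E' S" "card S \<le> 2"
      by (rule fragile_subgraph_small_cutset)
    then show ?thesis by (metis separation_if_cutset)
  next
    case False
    with \<open>card V' \<ge> 3\<close> have "card V' = 3" by simp
    with \<open>graph V' E'\<close> obtain t X where "separation V' E' {t} X"
      using triangle_free by (rule triangle_free_three_vertices_separation)
    then show ?thesis by force
  qed
  then obtain T0 X0 where "separation V' E' T0 X0" "card T0 \<le> 2" by blast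
  then obtain T X where sep: "separation V' E' T X" "card T \<le> 2"
    and minimal: "\<And>T' Y. separation V' E' T' Y \<Longrightarrow> card T' \<le> 2 \<Longrightarrow> card X \<le> card Y"
    using ex_has_least_nat[of "\<lambda>(T, X). separation V' E' T X \<and> card T \<le> 2" "(T0, X0)" "card \<circ> snd"]
    by auto
  obtain u v where uv: "T = {u, v}" "u \<noteq> v" "adj E' u v" using edge_cuts[OF sep] by blast
  have "card X = 1"
    using edge_cuts
    by (intro minimal_separation_side_singleton[OF assms(2) H _ sep(1)[unfolded uv(1)] uv(2,3) minimal])
      blast
  then obtain w where "X = {w}" by (rule card_1_singletonE)
  have no_cut_vertex: "\<not> separation V' E' {q} Y" for q Y
    using edge_cuts[of "{q}" Y] by (auto simp: doubleton_eq_iff)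
  have "separation V' E' {u, v} {w}" "separation V' E' {v, u} {w}"
    using sep(1) uv(1) \<open>X = {w}\<close> by (simp_all add: insert_commute)
  then have "adj E' w u" "adj E' w v"
    using singleton_side_adj_separator[OF _ _ no_cut_vertex] uv(2) by auto
  moreover have "u \<in> V'" "v \<in> V'" "w \<in> V'"
    using sep(1) uv(1) \<open>X = {w}\<close> unfolding separation_def by auto
  ultimately show False using triangle_free uv(3) by blast
qed

lemma fragile_if_small_cutsets:
  assumes "\<forall>V' E'. subgraph V' E' V E \<longrightarrow> card V' \<le> 2 \<or> (\<exists>S. cutset V' E' S \<and> card S \<le> 2)"
  shows "fragile V E"
  using assms unfolding fragile_def k_connected_def by fastforce

theorem mainTheorem9:
  fixes V :: "'a set" and E :: "'a set set"
  assumes "graph V E" and "girth_ge_4 V E"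
  shows "fragile V E \<longleftrightarrow>
    (\<forall>V' E'. subgraph V' E' V E \<longrightarrow>
       card V' \<le> 2 \<or> (\<exists>S. cutset V' E' S \<and> independent E' S \<and> card S \<le> 2))"
proof
  assume "fragile V E"
  then show "\<forall>V' E'. subgraph V' E' V E \<longrightarrow>
      card V' \<le> 2 \<or> (\<exists>S. cutset V' E' S \<and> independent E' S \<and> card S \<le> 2)"
  proof (intro allI impI)
    fix V' E' assume "subgraph V' E' V E"
    with \<open>fragile V E\<close> show "card V' \<le> 2 \<or> (\<exists>S. cutset V' E' S \<and> independent E' S \<and> card S \<le> 2)"
      using small_independent_cutset_if_fragile[OF assms(2)] by (cases "card V' \<le> 2") auto
  qed
next
  assume "\<forall>V' E'. subgraph V' E' V E \<longrightarrow>
      card V' \<le> 2 \<or> (\<exists>S. cutset V' E' S \<and> independent E' S \<and> card S \<le> 2)"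
  then show "fragile V E" by (intro fragile_if_small_cutsets) blast
qed

end
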